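(* Let $\alpha=(\alpha_1,\ldots,\alpha_n)$ be a composition, and suppose there is $1\le r\le n-1$ with $\alpha_r<\alpha_{r+1}$. Let $\alpha'=\alpha\cdot s_r$ and $V(\gamma)=\{\beta\colon\beta\le\gamma\}$. Then \[V(\alpha)=V(\alpha')\cup\{v\cdot s_r\colon v\in V(\alpha')\}.\]
   Context: A composition is a sequence of $n$ nonnegative integers. For $v\in\mathbb{R}^n$ and $w=w_1\cdots w_n\in S_n$, $v\cdot w=(v_{w_1},\ldots,v_{w_n})$; $s_r$ is the adjacent transposition $(r,r+1)$, so $v\cdot s_r$ swaps the $r$-th and $(r+1)$-th entries. $\lambda(\gamma)$ is the weakly decreasing rearrangement of $\gamma$, and $w(\gamma)$ is the unique minimal-length permutation with $\lambda(\gamma)\cdot w(\gamma)=\gamma$. For compositions $\beta,\gamma$ of length $n$, $\beta\le\gamma$ means $\lambda(\beta)=\lambda(\gamma)$ and $w(\beta)\le w(\gamma)$ in the (strong) Bruhat order on $S_n$. *)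

theory Defs
  imports Main
begin

text \<open>Compositions of length n are lists of naturals of length n (positions 0..n-1
  represent 1..n). A permutation w in S_n is represented in one-line notation as a
  list w = [w_1,...,w_n] of the values 0..n-1 (0-indexed values).\<close>

definition is_perm :: "nat \<Rightarrow> nat list \<Rightarrow> bool" where
  "is_perm n w \<longleftrightarrow> length w = n \<and> distinct w \<and> set w = {0..<n}"

definition act :: "'a list \<Rightarrow> nat list \<Rightarrow> 'a list" where
  "act v w = map (\<lambda>i. v ! i) w"

definition transp_perm :: "nat \<Rightarrow> nat \<Rightarrow> nat \<Rightarrow> nat list" where
  "transp_perm n i j = map (\<lambda>k. if k = i then j else if k = j then i else k) [0..<n]"

text \<open>Adjacent transposition s_r = (r, r+1), for 1 \<le> r \<le> n-1 (1-indexed).\<close>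
definition s_adj :: "nat \<Rightarrow> nat \<Rightarrow> nat list" where
  "s_adj n r = transp_perm n (r - 1) r"

text \<open>Coxeter length = number of inversions.\<close>
definition inv_count :: "nat list \<Rightarrow> nat" where
  "inv_count w = card {(i, j). i < j \<and> j < length w \<and> w ! i > w ! j}"

definition bruhat_cover :: "nat list \<Rightarrow> nat list \<Rightarrow> bool" where
  "bruhat_cover u w \<longleftrightarrow> is_perm (length u) u \<and>
     (\<exists>i j. i < j \<and> j < length u \<and> w = act u (transp_perm (length u) i j)
            \<and> inv_count u < inv_count w)"

definition bruhat_le :: "nat list \<Rightarrow> nat list \<Rightarrow> bool" where
  "bruhat_le u w \<longleftrightarrow> is_perm (length u) u \<and> is_perm (length w) w \<and> bruhat_cover\<^sup>*\<^sup>* u w"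

definition lam :: "nat list \<Rightarrow> nat list" where
  "lam \<gamma> = rev (sort \<gamma>)"

definition wperm :: "nat list \<Rightarrow> nat list" where
  "wperm \<gamma> = (THE w. is_perm (length \<gamma>) w \<and> act (lam \<gamma>) w = \<gamma> \<and>
      (\<forall>w'. is_perm (length \<gamma>) w' \<and> act (lam \<gamma>) w' = \<gamma> \<longrightarrow> inv_count w \<le> inv_count w'))"

definition comp_le :: "nat list \<Rightarrow> nat list \<Rightarrow> bool" where
  "comp_le \<beta> \<gamma> \<longleftrightarrow> length \<beta> = length \<gamma> \<and> lam \<beta> = lam \<gamma> \<and> bruhat_le (wperm \<beta>) (wperm \<gamma>)"

definition Vset :: "nat list \<Rightarrow> nat list set" where
  "Vset \<gamma> = {\<beta>. comp_le \<beta> \<gamma>}"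

end

(*
  Let S be the adjacent transposition s_r and alpha' = alpha S, so that alpha' has a strict
  descent at r. The minimal-length permutation w(beta) is the unique permutation with
  lambda(beta) w(beta) = beta that keeps equal entries of beta in their original order. Hence
  w(beta S) = w(beta) S whenever beta_r and beta_(r+1) differ, while for equal entries w(beta) has
  an ascent at r and beta S = beta. In particular w(alpha) = w(alpha') S lies directly above
  w(alpha'), and the theorem reduces to the lifting property of the Bruhat order at a simple
  reflection: if x has an ascent at r, then u <= x implies u S <= x S, and u <= x S implies
  u <= x or u S <= x. Both follow by induction along chains of covers u < u t, conjugating t by S.
*)

theory Submission
  imports Defs "HOL-Combinatorics.Permutations"
begin

lemma transp_perm_conv_map: "transp_perm n i j = map (transpose i j) [0..<n]"
  by (simp add: transp_perm_def transpose_def)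

lemma length_transp_perm [simp]: "length (transp_perm n i j) = n"
  by (simp add: transp_perm_def)

lemma nth_transp_perm [simp]: "k < n \<Longrightarrow> transp_perm n i j ! k = transpose i j k"
  by (simp add: transp_perm_conv_map)

lemma transpose_less: "i < n \<Longrightarrow> j < n \<Longrightarrow> k < n \<Longrightarrow> transpose i j k < n"
  by (simp add: transpose_def)

lemma length_act [simp]: "length (act v w) = length w"
  by (simp add: act_def)

lemma nth_act [simp]: "k < length w \<Longrightarrow> act v w ! k = v ! (w ! k)"
  by (simp add: act_def)

lemma act_assoc: "\<forall>k\<in>set w. k < length v \<Longrightarrow> act (act u v) w = act u (act v w)"
  by (simp add: act_def)

lemma is_perm_transp_perm: "i < n \<Longrightarrow> j < n \<Longrightarrow> is_perm n (transp_perm n i j)"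
  by (simp add: is_perm_def transp_perm_conv_map distinct_map)

lemma is_perm_act:
  assumes "is_perm n u" and "is_perm n w"
  shows "is_perm n (act u w)"
proof -
  have "set (act u w) = (!) u ` {0..<n}"
    using assms(2) by (simp add: act_def is_perm_def)
  also have "\<dots> = set u"
    using assms(1) by (auto simp: is_perm_def set_conv_nth)
  finally show ?thesis
    using assms by (simp add: is_perm_def act_def distinct_map inj_on_nth)
qed

lemma act_transp_perm_involutory:
  "length u = n \<Longrightarrow> i < n \<Longrightarrow> j < n \<Longrightarrow> act (act u (transp_perm n i j)) (transp_perm n i j) = u"
  by (rule nth_equalityI) (simp_all add: transpose_less)

lemma act_transp_perm_eq_self:
  "length u = n \<Longrightarrow> i < n \<Longrightarrow> j < n \<Longrightarrow> u ! i = u ! j \<Longrightarrow> act u (transp_perm n i j) = u"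
  by (rule nth_equalityI) (simp_all add: transpose_def)

lemma act_transp_perm_conj:
  assumes "length u = n" and "i < n" "j < n" "k < n" "l < n"
  shows "act (act u (transp_perm n i j)) (transp_perm n k l) =
    act (act u (transp_perm n k l)) (transp_perm n (transpose k l i) (transpose k l j))"
  by (rule nth_equalityI) (use assms in \<open>simp_all add: transpose_less, simp add: transpose_def\<close>)

lemma mset_act: "is_perm (length v) w \<Longrightarrow> mset (act v w) = mset v"
proof -
  assume "is_perm (length v) w"
  then have "mset w = mset [0..<length v]"
    unfolding is_perm_def by (metis distinct_upt set_eq_iff_mset_eq_distinct set_upt)
  then have "mset (act v w) = mset (map ((!) v) [0..<length v])"
    by (simp add: act_def)
  then show ?thesis
    by (simp add: map_nth)
qed

lemma lam_act: "is_perm (length v) w \<Longrightarrow> lam (act v w) = lam v"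
  unfolding lam_def by (metis mset_act sorted_list_of_multiset_mset)

lemma length_lam [simp]: "length (lam g) = length g"
  by (simp add: lam_def)

lemma lam_antimono: "i \<le> j \<Longrightarrow> j < length g \<Longrightarrow> lam g ! j \<le> lam g ! i"
  by (simp add: lam_def rev_nth sorted_nth_mono)

definition inversions :: "nat list \<Rightarrow> (nat \<times> nat) set" where
  "inversions w = {(i, j). i < j \<and> j < length w \<and> w ! j < w ! i}"

lemma inv_count_eq_card_inversions: "inv_count w = card (inversions w)"
  by (simp add: inv_count_def inversions_def)

lemma finite_inversions: "finite (inversions w)"
  by (rule finite_subset[of _ "{..<length w} \<times> {..<length w}"]) (auto simp: inversions_def)

lemma inv_count_less_swap_ascent:
  assumes "length w = n" and "i < j" "j < n" and "w ! i < w ! j"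
  shows "inv_count w < inv_count (act w (transp_perm n i j))"
proof -
  define w' where "w' = act w (transp_perm n i j)"
  let ?\<tau> = "transpose i j"
  have nth_w': "\<And>k. k < n \<Longrightarrow> w' ! k = w ! ?\<tau> k"
    by (simp add: w'_def)
  text \<open>An inversion (p, q) of w goes to (\<tau> p, \<tau> q) when \<tau> keeps p before q, and to itself
    otherwise; the latter only happens when p = i < q < j or i < p < q = j, and then w ! i < w ! j
    makes (p, q) an inversion of w' as well.\<close>
  define f where "f = (\<lambda>(p, q). if ?\<tau> p < ?\<tau> q then (?\<tau> p, ?\<tau> q) else (p, q))"
  have "f ` inversions w \<subseteq> inversions w' - {(i, j)}"
  proof
    fix x assume "x \<in> f ` inversions w"
    then obtain p q where x: "x = f (p, q)" and pq: "p < q" "q < n" "w ! q < w ! p"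
      using assms(1) by (auto simp: inversions_def)
    show "x \<in> inversions w' - {(i, j)}"
    proof (cases "?\<tau> p < ?\<tau> q")
      case True
      then show ?thesis
        using x pq assms(2,3) nth_w'[of "?\<tau> p"] nth_w'[of "?\<tau> q"]
        by (auto simp: f_def w'_def inversions_def transpose_less transpose_eq_iff)
    next
      case False
      then have "w ! ?\<tau> q < w ! ?\<tau> p"
        using pq assms(2,4) by (auto simp: transpose_def split: if_splits)
      then show ?thesis
        using x False pq assms(4) nth_w' by (auto simp: f_def w'_def inversions_def)
    qed
  qed
  moreover have "inj_on f (inversions w)"
    by (rule inj_onI) (auto simp: f_def inversions_def inj_eq[OF inj_transpose] split: if_splits)
  moreover have "(i, j) \<in> inversions w'"
    using assms by (simp add: w'_def inversions_def)
  ultimately have "card (inversions w) < card (inversions w')"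
    by (metis card_Diff1_less card_image card_mono finite_Diff finite_inversions order_le_less_trans)
  then show ?thesis
    by (simp add: inv_count_eq_card_inversions w'_def)
qed

lemma inv_count_swap_descent_less:
  assumes "length w = n" and "i < j" "j < n" and "w ! j < w ! i"
  shows "inv_count (act w (transp_perm n i j)) < inv_count w"
  using inv_count_less_swap_ascent[of "act w (transp_perm n i j)" n i j] assms
  by (simp add: act_transp_perm_involutory)

lemma ascent_if_swap_increases_inv_count:
  assumes "is_perm n u" and "i < j" "j < n"
    and "inv_count u < inv_count (act u (transp_perm n i j))"
  shows "u ! i < u ! j"
proof -
  have "u ! i \<noteq> u ! j"
    using assms(1-3) by (simp add: is_perm_def nth_eq_iff_index_eq)
  then show ?thesis
    using inv_count_swap_descent_less[of u n i j] assms by (force simp: is_perm_def)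
qed

section \<open>Bruhat order and an adjacent transposition\<close>

lemma bruhat_rtranclp_length: "bruhat_cover\<^sup>*\<^sup>* u w \<Longrightarrow> length u = length w"
  by (induction rule: rtranclp_induct) (auto simp: bruhat_cover_def)

lemma bruhat_cover_act_adj_ascent:
  assumes "is_perm n x" and "Suc a < n" and "x ! a < x ! Suc a"
  shows "bruhat_cover x (act x (transp_perm n a (Suc a)))"
  using assms inv_count_less_swap_ascent[of x n a "Suc a"] by (auto simp: bruhat_cover_def is_perm_def)

lemma transpose_adj_less:
  "p < q \<Longrightarrow> (p, q) \<noteq> (a, Suc a) \<Longrightarrow> transpose a (Suc a) p < transpose a (Suc a) q"
  by (auto simp: transpose_def)

lemma bruhat_cover_act_adj_cases:
  assumes "bruhat_cover y z" and "length y = n" and "Suc a < n"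
  obtains (by_adj) "z = act y (transp_perm n a (Suc a))"
  | (conjugate) "bruhat_cover (act y (transp_perm n a (Suc a))) (act z (transp_perm n a (Suc a)))"
proof -
  let ?S = "transp_perm n a (Suc a)"
  obtain i j where ij: "i < j" "j < n" and z: "z = act y (transp_perm n i j)"
    and less: "inv_count y < inv_count z" and y: "is_perm n y"
    using assms(1,2) unfolding bruhat_cover_def by auto
  show ?thesis
  proof (cases "(i, j) = (a, Suc a)")
    case True
    then show ?thesis using that z by simp
  next
    case False
    text \<open>(y t) S = (y S) (S t S), and S t S swaps an ascent of y S because the adjacent
      transposition S preserves the order of every pair other than (a, a + 1).\<close>
    let ?i = "transpose a (Suc a) i" and ?j = "transpose a (Suc a) j"
    have ij': "?i < ?j" "?j < n" "?i < n"
      using transpose_adj_less[OF ij(1) False] ij assms(3) by (simp_all add: transpose_less)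
    have zS: "act z ?S = act (act y ?S) (transp_perm n ?i ?j)"
      using act_transp_perm_conj[OF assms(2)] ij assms(3) z by simp
    have "act y ?S ! ?i < act y ?S ! ?j"
      using ascent_if_swap_increases_inv_count[OF y ij] less z ij' by simp
    then have "inv_count (act y ?S) < inv_count (act z ?S)"
      unfolding zS using inv_count_less_swap_ascent[OF _ ij'(1,2)] by simp
    then have "bruhat_cover (act y ?S) (act z ?S)"
      unfolding bruhat_cover_def
      using is_perm_act[OF y is_perm_transp_perm] assms(3) ij' zS by auto
    then show ?thesis using that by blast
  qed
qed

lemma bruhat_rtranclp_act_adj_mono:
  assumes "bruhat_cover\<^sup>*\<^sup>* u x" and "is_perm n x" and "Suc a < n" and "x ! a < x ! Suc a"
  shows "bruhat_cover\<^sup>*\<^sup>* (act u (transp_perm n a (Suc a))) (act x (transp_perm n a (Suc a)))"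
  using assms(1)
proof (induction rule: converse_rtranclp_induct)
  case base
  show ?case by simp
next
  case (step y z)
  have "length y = n"
    using bruhat_rtranclp_length[OF converse_rtranclp_into_rtranclp[OF step.hyps]] assms(2)
    by (simp add: is_perm_def)
  from step.hyps(1) this assms(3) show ?case
  proof (cases rule: bruhat_cover_act_adj_cases)
    case by_adj
    then show ?thesis
      using step.hyps(2) bruhat_cover_act_adj_ascent[OF assms(2-4)] by simp
  next
    case conjugate
    then show ?thesis
      using step.IH by (rule converse_rtranclp_into_rtranclp)
  qed
qed

lemma bruhat_rtranclp_below_act_adj_cases:
  assumes "bruhat_cover\<^sup>*\<^sup>* u (act x (transp_perm n a (Suc a)))" and "is_perm n x" and "Suc a < n"
  shows "bruhat_cover\<^sup>*\<^sup>* u x \<or> bruhat_cover\<^sup>*\<^sup>* (act u (transp_perm n a (Suc a))) x"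
  using assms(1)
proof (induction rule: converse_rtranclp_induct)
  case base
  show ?case
    using assms(2,3) by (simp add: is_perm_def act_transp_perm_involutory)
next
  case (step y z)
  have y: "length y = n"
    using bruhat_rtranclp_length[OF converse_rtranclp_into_rtranclp[OF step.hyps]] assms(2)
    by (simp add: is_perm_def)
  from step.IH show ?case
  proof
    assume "bruhat_cover\<^sup>*\<^sup>* z x"
    then show ?thesis
      using step.hyps(1) by (simp add: converse_rtranclp_into_rtranclp)
  next
    assume zS: "bruhat_cover\<^sup>*\<^sup>* (act z (transp_perm n a (Suc a))) x"
    from step.hyps(1) y assms(3) show ?thesis
    proof (cases rule: bruhat_cover_act_adj_cases)
      case by_adj
      then show ?thesis
        using zS y assms(3) by (simp add: act_transp_perm_involutory)
    next
      case conjugate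
      then show ?thesis
        using zS by (simp add: converse_rtranclp_into_rtranclp)
    qed
  qed
qed

section \<open>The minimal-length sorting permutation\<close>

definition sorting_perm :: "nat list \<Rightarrow> nat list \<Rightarrow> bool" where
  "sorting_perm g w \<longleftrightarrow> is_perm (length g) w \<and> act (lam g) w = g"

definition stable_on_ties :: "nat list \<Rightarrow> nat list \<Rightarrow> bool" where
  "stable_on_ties g w \<longleftrightarrow> (\<forall>p q. p < q \<longrightarrow> q < length g \<longrightarrow> g ! p = g ! q \<longrightarrow> w ! p < w ! q)"

lemma sorting_perm_exists: "\<exists>w. sorting_perm g w"
proof -
  obtain f where f: "f permutes {..<length g}" and "permute_list f (lam g) = g"
    using mset_eq_permutation[of g "lam g"] by (auto simp: lam_def)
  then have "act (lam g) (map f [0..<length g]) = g"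
    by (simp add: act_def permute_list_def comp_def)
  moreover have "is_perm (length g) (map f [0..<length g])"
    using permutes_inj_on[OF f] permutes_image[OF f]
    by (simp add: is_perm_def distinct_map atLeast0LessThan)
  ultimately show ?thesis
    by (auto simp: sorting_perm_def)
qed

lemma sorting_perm_nth: "sorting_perm g w \<Longrightarrow> p < length g \<Longrightarrow> g ! p = lam g ! (w ! p)"
  unfolding sorting_perm_def is_perm_def by (metis nth_act)

lemma sorting_perm_nth_less: "sorting_perm g w \<Longrightarrow> p < length g \<Longrightarrow> w ! p < length g"
  unfolding sorting_perm_def is_perm_def by (metis atLeastLessThan_iff nth_mem)

lemma stable_sorting_perm_less_iff:
  assumes w: "sorting_perm g w" "stable_on_ties g w" and "p < length g" "k < length g"
  shows "w ! p < w ! k \<longleftrightarrow> g ! k < g ! p \<or> (g ! p = g ! k \<and> p < k)"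
proof -
  have antimono: "g ! j \<le> g ! i" if "i < length g" "j < length g" "w ! i \<le> w ! j" for i j
    using lam_antimono[OF that(3)] sorting_perm_nth[OF w(1)] sorting_perm_nth_less[OF w(1)] that
    by simp
  have ties: "w ! p < w ! k \<longleftrightarrow> p < k" if "g ! p = g ! k"
    using w(2) assms(3,4) that unfolding stable_on_ties_def by (metis less_asym linorder_neqE_nat)
  show ?thesis
  proof (cases "g ! p = g ! k")
    case True
    then show ?thesis using ties by simp
  next
    case False
    then show ?thesis using antimono[of p k] antimono[of k p] assms(3,4) by linarith
  qed
qed

lemma perm_nth_eq_card_less:
  assumes "is_perm n w" and "k < n"
  shows "w ! k = card {p. p < n \<and> w ! p < w ! k}"
proof -
  have "w ! k < n"
    using assms nth_mem by (fastforce simp: is_perm_def)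
  have "(!) w ` {p. p < n \<and> w ! p < w ! k} = {x \<in> set w. x < w ! k}"
    using assms(1) by (auto simp: is_perm_def set_conv_nth)
  also have "\<dots> = {..<w ! k}"
    using assms(1) \<open>w ! k < n\<close> by (auto simp: is_perm_def)
  finally show ?thesis
    using assms(1) card_image[OF inj_on_nth, of w "{p. p < n \<and> w ! p < w ! k}"]
    by (simp add: is_perm_def)
qed

lemma stable_sorting_perm_unique:
  assumes "sorting_perm g w" "stable_on_ties g w" and "sorting_perm g w'" "stable_on_ties g w'"
  shows "w = w'"
proof (rule nth_equalityI)
  show "length w = length w'"
    using assms by (simp add: sorting_perm_def is_perm_def)
  fix k assume "k < length w"
  then have k: "k < length g"
    using assms(1) by (simp add: sorting_perm_def is_perm_def)
  have "{p. p < length g \<and> w ! p < w ! k} = {p. p < length g \<and> w' ! p < w' ! k}"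
    using stable_sorting_perm_less_iff[OF assms(1,2) _ k] stable_sorting_perm_less_iff[OF assms(3,4) _ k]
    by auto
  then show "w ! k = w' ! k"
    using perm_nth_eq_card_less k assms(1,3) by (metis sorting_perm_def)
qed

lemma minimal_sorting_perm_stable:
  assumes w: "sorting_perm g w" and min: "\<forall>w'. sorting_perm g w' \<longrightarrow> inv_count w \<le> inv_count w'"
  shows "stable_on_ties g w"
  unfolding stable_on_ties_def
proof (intro allI impI)
  fix p q assume pq: "p < q" "q < length g" and tie: "g ! p = g ! q"
  let ?t = "transp_perm (length g) p q"
  have "w ! p \<noteq> w ! q"
    using w pq by (simp add: sorting_perm_def is_perm_def nth_eq_iff_index_eq)
  moreover have "\<not> w ! q < w ! p"
  proof
    assume desc: "w ! q < w ! p"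
    have "act (lam g) (act w ?t) = act g ?t"
      using w pq by (subst act_assoc[symmetric]) (auto simp: sorting_perm_def is_perm_def transp_perm_def)
    also have "\<dots> = g"
      using pq tie by (intro act_transp_perm_eq_self) auto
    finally have "sorting_perm g (act w ?t)"
      using w pq is_perm_act[OF _ is_perm_transp_perm] by (simp add: sorting_perm_def)
    moreover have "inv_count (act w ?t) < inv_count w"
      using inv_count_swap_descent_less[OF _ pq desc] w by (simp add: sorting_perm_def is_perm_def)
    ultimately show False
      using min by (simp add: leD)
  qed
  ultimately show "w ! p < w ! q"
    by simp
qed

lemma wperm_minimal_sorting_perm:
  "sorting_perm g (wperm g) \<and> (\<forall>w. sorting_perm g w \<longrightarrow> inv_count (wperm g) \<le> inv_count w)"
proof -
  let ?P = "\<lambda>w. sorting_perm g w \<and> (\<forall>w'. sorting_perm g w' \<longrightarrow> inv_count w \<le> inv_count w')"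
  have "\<exists>w. ?P w"
    using sorting_perm_exists ex_has_least_nat[of "sorting_perm g"] by blast
  then have "\<exists>!w. ?P w"
    using stable_sorting_perm_unique minimal_sorting_perm_stable by blast
  moreover have "wperm g = (THE w. ?P w)"
    by (simp add: wperm_def sorting_perm_def)
  ultimately show ?thesis
    using theI'[of ?P] by simp
qed

lemma sorting_perm_wperm: "sorting_perm g (wperm g)"
  using wperm_minimal_sorting_perm by blast

lemma stable_on_ties_wperm: "stable_on_ties g (wperm g)"
  using wperm_minimal_sorting_perm minimal_sorting_perm_stable by blast

lemma wperm_eqI: "sorting_perm g w \<Longrightarrow> stable_on_ties g w \<Longrightarrow> wperm g = w"
  using stable_sorting_perm_unique sorting_perm_wperm stable_on_ties_wperm by blast

lemma is_perm_wperm: "is_perm (length g) (wperm g)"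
  using sorting_perm_wperm by (simp add: sorting_perm_def)

lemma length_wperm [simp]: "length (wperm g) = length g"
  using is_perm_wperm by (simp add: is_perm_def)

lemma wperm_ascent_iff:
  "Suc a < length g \<Longrightarrow> wperm g ! a < wperm g ! Suc a \<longleftrightarrow> g ! Suc a \<le> g ! a"
  using stable_sorting_perm_less_iff[OF sorting_perm_wperm stable_on_ties_wperm, of a g "Suc a"]
  by auto

lemma wperm_act_adj:
  assumes "length v = n" and "Suc a < n" and "v ! a \<noteq> v ! Suc a"
  shows "wperm (act v (transp_perm n a (Suc a))) = act (wperm v) (transp_perm n a (Suc a))"
proof (rule wperm_eqI)
  let ?S = "transp_perm n a (Suc a)" and ?\<tau> = "transpose a (Suc a)"
  have S: "is_perm n ?S"
    using assms(2) by (simp add: is_perm_transp_perm)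
  have w: "sorting_perm v (wperm v)" "stable_on_ties v (wperm v)"
    by (rule sorting_perm_wperm stable_on_ties_wperm)+
  have "act (lam v) (act (wperm v) ?S) = act (act (lam v) (wperm v)) ?S"
    using assms(1,2) by (subst act_assoc) (auto simp: transp_perm_def)
  then show "sorting_perm (act v ?S) (act (wperm v) ?S)"
    using w(1) S assms(1) lam_act[of v ?S] is_perm_act[OF is_perm_wperm[of v]]
    by (simp add: sorting_perm_def)
  show "stable_on_ties (act v ?S) (act (wperm v) ?S)"
    unfolding stable_on_ties_def
  proof (intro allI impI)
    fix p q assume pq: "p < q" "q < length (act v ?S)" and tie: "act v ?S ! p = act v ?S ! q"
    then have tie': "v ! ?\<tau> p = v ! ?\<tau> q" and "(p, q) \<noteq> (a, Suc a)"
      using assms(3) by auto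
    then have "?\<tau> p < ?\<tau> q"
      using transpose_adj_less pq(1) by blast
    moreover have "?\<tau> q < n"
      using pq assms(2) by (simp add: transpose_less)
    ultimately have "wperm v ! ?\<tau> p < wperm v ! ?\<tau> q"
      using w(2) tie' assms(1) unfolding stable_on_ties_def by simp
    then show "act (wperm v) ?S ! p < act (wperm v) ?S ! q"
      using pq by simp
  qed
qed

section \<open>Lower intervals of compositions\<close>

lemma mem_Vset_iff:
  "\<beta> \<in> Vset \<gamma> \<longleftrightarrow>
    length \<beta> = length \<gamma> \<and> lam \<beta> = lam \<gamma> \<and> bruhat_cover\<^sup>*\<^sup>* (wperm \<beta>) (wperm \<gamma>)"
  by (auto simp: Vset_def comp_le_def bruhat_le_def is_perm_wperm)

lemma wperm_act_adj_cases:
  assumes "length v = n" and "Suc a < n"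
  obtains (tie) "act v (transp_perm n a (Suc a)) = v" and "wperm v ! a < wperm v ! Suc a"
  | (no_tie) "wperm (act v (transp_perm n a (Suc a))) = act (wperm v) (transp_perm n a (Suc a))"
  using assms wperm_act_adj[OF assms] act_transp_perm_eq_self[OF assms(1)] wperm_ascent_iff[of a v]
  by (cases "v ! a = v ! Suc a") auto

lemma Vset_act_adj_of_descent:
  assumes "Suc a < length \<gamma>" and "\<gamma> ! Suc a < \<gamma> ! a"
  defines "S \<equiv> transp_perm (length \<gamma>) a (Suc a)"
  shows "Vset (act \<gamma> S) = Vset \<gamma> \<union> (\<lambda>v. act v S) ` Vset \<gamma>"
proof -
  let ?n = "length \<gamma>" and ?x = "wperm \<gamma>"
  have x: "is_perm ?n ?x" "?x ! a < ?x ! Suc a"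
    using is_perm_wperm wperm_ascent_iff assms(1,2) by auto
  have wperm_\<gamma>S: "wperm (act \<gamma> S) = act ?x S"
    using wperm_act_adj assms by simp
  have cover: "bruhat_cover ?x (act ?x S)"
    using bruhat_cover_act_adj_ascent[OF x(1) assms(1) x(2)] by (simp add: S_def)
  have length_S: "length S = ?n"
    by (simp add: S_def)
  have lam_S: "lam (act v S) = lam v" if "length v = ?n" for v
    using lam_act is_perm_transp_perm assms(1) that by (simp add: S_def)
  have SS: "act (act v S) S = v" if "length v = ?n" for v
    using act_transp_perm_involutory[of v ?n a "Suc a"] that assms(1) by (simp add: S_def)
  have lower: "Vset \<gamma> \<subseteq> Vset (act \<gamma> S)"
    using cover wperm_\<gamma>S length_S lam_S by (auto simp: mem_Vset_iff rtranclp.rtrancl_into_rtrancl)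
  show ?thesis
  proof (intro equalityI subsetI)
    fix \<beta> assume "\<beta> \<in> Vset (act \<gamma> S)"
    then have \<beta>: "length \<beta> = ?n" "lam \<beta> = lam \<gamma>" and "bruhat_cover\<^sup>*\<^sup>* (wperm \<beta>) (act ?x S)"
      using wperm_\<gamma>S length_S lam_S by (auto simp: mem_Vset_iff)
    then consider "bruhat_cover\<^sup>*\<^sup>* (wperm \<beta>) ?x" | "bruhat_cover\<^sup>*\<^sup>* (act (wperm \<beta>) S) ?x"
      using bruhat_rtranclp_below_act_adj_cases x(1) assms(1) S_def by blast
    then show "\<beta> \<in> Vset \<gamma> \<union> (\<lambda>v. act v S) ` Vset \<gamma>"
    proof cases
      case 1
      then show ?thesis using \<beta> by (simp add: mem_Vset_iff)
    next
      case 2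
      from \<beta>(1) assms(1) show ?thesis
      proof (cases rule: wperm_act_adj_cases)
        case tie
        then have "bruhat_cover (wperm \<beta>) (act (wperm \<beta>) S)"
          using bruhat_cover_act_adj_ascent[OF is_perm_wperm[of \<beta>]] \<beta>(1) assms(1) by (simp add: S_def)
        then have "bruhat_cover\<^sup>*\<^sup>* (wperm \<beta>) ?x"
          using 2 by (rule converse_rtranclp_into_rtranclp)
        then show ?thesis using \<beta> by (simp add: mem_Vset_iff)
      next
        case no_tie
        then have "act \<beta> S \<in> Vset \<gamma>"
          using 2 \<beta> length_S lam_S by (simp add: mem_Vset_iff S_def)
        then show ?thesis
          using SS[OF \<beta>(1)] by (metis UnI2 image_eqI)
      qed
    qed
  next
    fix \<beta> assume "\<beta> \<in> Vset \<gamma> \<union> (\<lambda>v. act v S) ` Vset \<gamma>"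
    then consider "\<beta> \<in> Vset \<gamma>" | v where "\<beta> = act v S" and "v \<in> Vset \<gamma>"
      by blast
    then show "\<beta> \<in> Vset (act \<gamma> S)"
    proof cases
      case 1
      then show ?thesis using lower by blast
    next
      case 2
      then have v: "length v = ?n" "lam v = lam \<gamma>" and "bruhat_cover\<^sup>*\<^sup>* (wperm v) ?x"
        by (auto simp: mem_Vset_iff)
      from v(1) assms(1) show ?thesis
      proof (cases rule: wperm_act_adj_cases)
        case tie
        then show ?thesis using 2 lower by (auto simp: S_def)
      next
        case no_tie
        have "bruhat_cover\<^sup>*\<^sup>* (wperm \<beta>) (act ?x S)"
          using bruhat_rtranclp_act_adj_mono[OF \<open>bruhat_cover\<^sup>*\<^sup>* (wperm v) ?x\<close> x(1) assms(1) x(2)]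
            no_tie 2 by (simp add: S_def)
        then show ?thesis
          using 2 v wperm_\<gamma>S length_S lam_S by (simp add: mem_Vset_iff)
      qed
    qed
  qed
qed

theorem proposition4p3:
  fixes \<alpha> :: "nat list" and r :: nat
  assumes "1 \<le> r" and "r \<le> length \<alpha> - 1"
    and "\<alpha> ! (r - 1) < \<alpha> ! r"
  shows "Vset \<alpha> = Vset (act \<alpha> (s_adj (length \<alpha>) r)) \<union>
           {act v (s_adj (length \<alpha>) r) | v. v \<in> Vset (act \<alpha> (s_adj (length \<alpha>) r))}"
proof -
  define a where "a = r - 1"
  define S where "S = transp_perm (length \<alpha>) a (Suc a)"
  define \<alpha>' where "\<alpha>' = act \<alpha> S"
  have a: "Suc a < length \<alpha>" and r: "r = Suc a"
    using assms(1,2) by (auto simp: a_def)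
  have "length \<alpha>' = length \<alpha>"
    by (simp add: \<alpha>'_def S_def)
  moreover have "\<alpha>' ! Suc a < \<alpha>' ! a"
    using assms(3) a by (simp add: \<alpha>'_def S_def r)
  ultimately have "Vset (act \<alpha>' S) = Vset \<alpha>' \<union> (\<lambda>v. act v S) ` Vset \<alpha>'"
    using Vset_act_adj_of_descent[of a \<alpha>'] a by (simp add: S_def)
  moreover have "act \<alpha>' S = \<alpha>"
    using act_transp_perm_involutory[of \<alpha> "length \<alpha>" a "Suc a"] a by (simp add: \<alpha>'_def S_def)
  ultimately show ?thesis
    by (simp add: \<alpha>'_def S_def s_adj_def r Setcompr_eq_image)
qed

end
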